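(* Let $S$ and $T$ be IP-regular semigroups, and suppose $T$ has no idempotent elements. Then the free product $S*T$ is IP-regular.
   Context: For a (partial) semigroup $P$, $E(P)$ is the set of idempotents; any subset $X$ carries the induced partial operation ($ab$ defined iff $ab\in X$). For a sequence $\vec{x}=(x_n)_{n\in\omega}$ all of whose finite ordered products $\prod_{i\in a}x_i$ ($a$ finite nonempty subset of $\omega$) are defined, $\mathrm{FP}(\vec{x})$ is the set of these products, $\mathrm{FP}_1(\vec{x})=\mathrm{FP}((x_{n+1})_n)$; an IP-set is a set containing such an $\mathrm{FP}(\vec{x})$. $X$ is strongly IP-regular if for every sequence $\vec{x}$ in $X$ with all finite products defined in $X$, $x_0\mathrm{FP}_1(\vec{x})$ is not an IP-set of $X$. $P$ is IP-regular if $P\setminus E(P)$ is a union of finitely many strongly IP-regular subsets. *)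

theory Defs
  imports Main
begin

(* A semigroup is given by an ambient carrier P and an operation f (associative, closed on P).
   Subsets X of P carry the induced partial operation. *)

fun lprod :: "('a \<Rightarrow> 'a \<Rightarrow> 'a) \<Rightarrow> 'a list \<Rightarrow> 'a" where
  "lprod f [] = undefined"
| "lprod f [y] = y"
| "lprod f (y # z # ys) = f y (lprod f (z # ys))"

definition oprod :: "('a \<Rightarrow> 'a \<Rightarrow> 'a) \<Rightarrow> (nat \<Rightarrow> 'a) \<Rightarrow> nat set \<Rightarrow> 'a" where
  "oprod f x a = lprod f (map x (sorted_list_of_set a))"

definition FP :: "('a \<Rightarrow> 'a \<Rightarrow> 'a) \<Rightarrow> (nat \<Rightarrow> 'a) \<Rightarrow> 'a set" where
  "FP f x = {oprod f x a | a. finite a \<and> a \<noteq> {}}"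

definition FP1 :: "('a \<Rightarrow> 'a \<Rightarrow> 'a) \<Rightarrow> (nat \<Rightarrow> 'a) \<Rightarrow> 'a set" where
  "FP1 f x = FP f (\<lambda>n. x (Suc n))"

definition idems :: "'a set \<Rightarrow> ('a \<Rightarrow> 'a \<Rightarrow> 'a) \<Rightarrow> 'a set" where
  "idems P f = {p \<in> P. f p p = p}"

text \<open>All finite ordered products of x are defined in X (w.r.t. the induced partial
  operation) iff every finite product lies in X.\<close>
definition FP_defined_in :: "('a \<Rightarrow> 'a \<Rightarrow> 'a) \<Rightarrow> 'a set \<Rightarrow> (nat \<Rightarrow> 'a) \<Rightarrow> bool" where
  "FP_defined_in f X x \<longleftrightarrow> FP f x \<subseteq> X"

definition IP_set_of :: "('a \<Rightarrow> 'a \<Rightarrow> 'a) \<Rightarrow> 'a set \<Rightarrow> 'a set \<Rightarrow> bool" where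
  "IP_set_of f X A \<longleftrightarrow> A \<subseteq> X \<and> (\<exists>y. FP_defined_in f X y \<and> FP f y \<subseteq> A)"

definition strongly_IP_regular :: "('a \<Rightarrow> 'a \<Rightarrow> 'a) \<Rightarrow> 'a set \<Rightarrow> bool" where
  "strongly_IP_regular f X \<longleftrightarrow>
     (\<forall>x. FP_defined_in f X x \<longrightarrow> \<not> IP_set_of f X ((\<lambda>p. f (x 0) p) ` FP1 f x))"

definition IP_regular :: "'a set \<Rightarrow> ('a \<Rightarrow> 'a \<Rightarrow> 'a) \<Rightarrow> bool" where
  "IP_regular P f \<longleftrightarrow>
     (\<exists>\<F>. finite \<F> \<and> \<Union>\<F> = P - idems P f \<and> (\<forall>X\<in>\<F>. strongly_IP_regular f X))"

text \<open>Elements of S*T: nonempty words over S + T whose consecutive letters come from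
  different factors; multiplication is concatenation followed by merging the two
  letters at the junction if they come from the same factor.\<close>

fun same_side :: "'a + 'b \<Rightarrow> 'a + 'b \<Rightarrow> bool" where
  "same_side (Inl _) (Inl _) = True"
| "same_side (Inr _) (Inr _) = True"
| "same_side _ _ = False"

definition alternating :: "('a + 'b) list \<Rightarrow> bool" where
  "alternating xs \<longleftrightarrow> (\<forall>i. Suc i < length xs \<longrightarrow> \<not> same_side (xs ! i) (xs ! Suc i))"

definition free_prod_carrier :: "('a + 'b) list set" where
  "free_prod_carrier = {xs. xs \<noteq> [] \<and> alternating xs}"

fun merge_letters :: "'a::semigroup_mult + 'b::semigroup_mult \<Rightarrow> 'a + 'b \<Rightarrow> ('a + 'b) list" where
  "merge_letters (Inl a) (Inl b) = [Inl (a * b)]"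
| "merge_letters (Inr a) (Inr b) = [Inr (a * b)]"
| "merge_letters u v = [u, v]"

definition free_prod_mult ::
  "('a::semigroup_mult + 'b::semigroup_mult) list \<Rightarrow> ('a + 'b) list \<Rightarrow> ('a + 'b) list" where
  "free_prod_mult xs ys =
     (if xs = [] then ys else if ys = [] then xs
      else butlast xs @ merge_letters (last xs) (hd ys) @ tl ys)"

end

theory Submission
  imports Defs
begin

text \<open>Strong IP-regularity pulls back along partial homomorphisms: if h maps X
  into Z and is multiplicative on a subsemigroup D \<supseteq> X, then h carries finite products
  to finite products, so a sequence in X witnessing that x0 FP1(x) is an IP-set of X
  maps to one witnessing the same in Z.

  In S * T, a word either contains a letter from T, or it is a single letter of S.
  Multiplying out the T-letters of a word (the result lives in T extended by a unit)
  is a homomorphism, so the words whose T-part lies in a strongly IP-regular Y \<subseteq> T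
  form a strongly IP-regular set; since T has no idempotents none of these words is
  idempotent. The single letters of S are a copy of S. Hence the pieces of the two
  given decompositions yield a decomposition of the non-idempotents of S * T.\<close>

definition hom_on :: "'a set \<Rightarrow> ('a \<Rightarrow> 'a \<Rightarrow> 'a) \<Rightarrow> ('b \<Rightarrow> 'b \<Rightarrow> 'b) \<Rightarrow> ('a \<Rightarrow> 'b) \<Rightarrow> bool" where
  "hom_on D f g h \<longleftrightarrow> (\<forall>u\<in>D. \<forall>v\<in>D. f u v \<in> D \<and> h (f u v) = g (h u) (h v))"

lemma hom_onD:
  assumes "hom_on D f g h" "u \<in> D" "v \<in> D"
  shows "f u v \<in> D" "h (f u v) = g (h u) (h v)"
  using assms unfolding hom_on_def by blast+

lemma lprod_hom_on:
  assumes "hom_on D f g h" "l \<noteq> []" "set l \<subseteq> D"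
  shows "lprod f l \<in> D \<and> h (lprod f l) = lprod g (map h l)"
  using assms(2,3)
proof (induction l)
  case (Cons y l)
  show ?case
  proof (cases "l = []")
    case False
    with Cons have "y \<in> D" "lprod f l \<in> D" "h (lprod f l) = lprod g (map h l)"
      by auto
    with False show ?thesis
      using hom_onD[OF assms(1), of y "lprod f l"] by (cases l) auto
  qed (use Cons.prems in simp)
qed simp

lemma oprod_hom_on:
  assumes "hom_on D f g h" "range x \<subseteq> D" "finite a" "a \<noteq> {}"
  shows "oprod f x a \<in> D \<and> h (oprod f x a) = oprod g (h \<circ> x) a"
  using lprod_hom_on[OF assms(1), of "map x (sorted_list_of_set a)"] assms(2-4)
  by (auto simp: oprod_def)

lemma FP_eq_image: "FP f x = oprod f x ` {a. finite a \<and> a \<noteq> {}}"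
  unfolding FP_def by blast

lemma FP_hom_on:
  assumes "hom_on D f g h" "range x \<subseteq> D"
  shows "FP f x \<subseteq> D" and "FP g (h \<circ> x) = h ` FP f x"
proof -
  show "FP f x \<subseteq> D"
    unfolding FP_eq_image using oprod_hom_on[OF assms] by blast
  have "FP g (h \<circ> x) = (\<lambda>a. h (oprod f x a)) ` {a. finite a \<and> a \<noteq> {}}"
    unfolding FP_eq_image using oprod_hom_on[OF assms] by (intro image_cong) simp_all
  then show "FP g (h \<circ> x) = h ` FP f x"
    by (simp add: FP_eq_image image_image)
qed

lemma FP1_hom_on:
  assumes "hom_on D f g h" "range x \<subseteq> D"
  shows "FP1 f x \<subseteq> D" and "FP1 g (h \<circ> x) = h ` FP1 f x"
proof -
  have "range (\<lambda>n. x (Suc n)) \<subseteq> D" using assms(2) by auto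
  from FP_hom_on[OF assms(1) this]
  show "FP1 f x \<subseteq> D" and "FP1 g (h \<circ> x) = h ` FP1 f x"
    by (simp_all add: FP1_def comp_def)
qed

lemma translate_FP1_hom_on:
  assumes hom: "hom_on D f g h" and xD: "range x \<subseteq> D"
  shows "g (h (x 0)) ` FP1 g (h \<circ> x) = h ` (f (x 0) ` FP1 f x)"
proof -
  have "g (h (x 0)) ` FP1 g (h \<circ> x) = (\<lambda>p. g (h (x 0)) (h p)) ` FP1 f x"
    by (simp add: FP1_hom_on(2)[OF hom xD] image_image)
  also have "\<dots> = h ` (f (x 0) ` FP1 f x)"
    unfolding image_image
  proof (intro image_cong refl)
    fix p assume "p \<in> FP1 f x"
    with FP1_hom_on(1)[OF hom xD] xD have "x 0 \<in> D" "p \<in> D" by auto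
    then show "g (h (x 0)) (h p) = h (f (x 0) p)" by (simp add: hom_onD(2)[OF hom])
  qed
  finally show ?thesis .
qed

lemma range_subset_FP: "range x \<subseteq> FP f x"
proof
  fix y assume "y \<in> range x"
  then obtain i where "y = x i" by blast
  then have "y = oprod f x {i}" by (simp add: oprod_def)
  then show "y \<in> FP f x" unfolding FP_def by blast
qed

lemma strongly_IP_regular_pullback:
  assumes hom: "hom_on D f g h" and "X \<subseteq> D" and hX: "h ` X \<subseteq> Z"
    and Z: "strongly_IP_regular g Z"
  shows "strongly_IP_regular f X"
  unfolding strongly_IP_regular_def
proof (intro allI impI notI)
  fix x assume x: "FP_defined_in f X x" and IP: "IP_set_of f X (f (x 0) ` FP1 f x)"
  have xD: "range x \<subseteq> D"
    using range_subset_FP[of x f] x \<open>X \<subseteq> D\<close> unfolding FP_defined_in_def by blast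
  obtain y where yX: "FP f y \<subseteq> X" and y: "FP f y \<subseteq> f (x 0) ` FP1 f x"
    using IP unfolding IP_set_of_def FP_defined_in_def by blast
  have yD: "range y \<subseteq> D"
    using range_subset_FP[of y f] yX \<open>X \<subseteq> D\<close> by blast
  have image: "g ((h \<circ> x) 0) ` FP1 g (h \<circ> x) = h ` (f (x 0) ` FP1 f x)"
    using translate_FP1_hom_on[OF hom xD] by simp
  have "FP_defined_in g Z (h \<circ> x)"
    using FP_hom_on(2)[OF hom xD] x hX unfolding FP_defined_in_def by auto
  moreover have "IP_set_of g Z (g ((h \<circ> x) 0) ` FP1 g (h \<circ> x))"
    unfolding IP_set_of_def FP_defined_in_def
  proof (intro conjI exI)
    have "f (x 0) ` FP1 f x \<subseteq> X" using IP unfolding IP_set_of_def by blast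
    then show "g ((h \<circ> x) 0) ` FP1 g (h \<circ> x) \<subseteq> Z"
      unfolding image using hX by blast
    show "FP g (h \<circ> y) \<subseteq> Z"
      unfolding FP_hom_on(2)[OF hom yD] using yX hX by blast
    show "FP g (h \<circ> y) \<subseteq> g ((h \<circ> x) 0) ` FP1 g (h \<circ> x)"
      unfolding FP_hom_on(2)[OF hom yD] image using y by (rule image_mono)
  qed
  ultimately show False using Z unfolding strongly_IP_regular_def by blast
qed

fun opt_mult :: "'b::semigroup_mult option \<Rightarrow> 'b option \<Rightarrow> 'b option" where
  "opt_mult None y = y"
| "opt_mult x None = x"
| "opt_mult (Some a) (Some b) = Some (a * b)"

lemma opt_mult_None_right [simp]: "opt_mult a None = a"
  by (cases a) auto

lemma opt_mult_Some_left [simp]: "opt_mult (Some a) b \<noteq> None"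
  by (cases b) auto

lemma opt_mult_assoc: "opt_mult (opt_mult a b) c = opt_mult a (opt_mult b c)"
  by (cases a; cases b; cases c) (simp_all add: mult.assoc)

fun right_part :: "('a + 'b::semigroup_mult) list \<Rightarrow> 'b option" where
  "right_part [] = None"
| "right_part (Inl _ # xs) = right_part xs"
| "right_part (Inr t # xs) = opt_mult (Some t) (right_part xs)"

lemma right_part_append: "right_part (xs @ ys) = opt_mult (right_part xs) (right_part ys)"
  by (induction xs rule: right_part.induct) (auto simp: opt_mult_assoc)

lemma right_part_merge_letters:
  "right_part (merge_letters a b) = opt_mult (right_part [a]) (right_part [b])"
  by (cases a; cases b) auto

lemma right_part_free_prod_mult:
  "right_part (free_prod_mult u v) = opt_mult (right_part u) (right_part v)"
proof (cases "u = [] \<or> v = []")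
  case True
  then show ?thesis by (auto simp: free_prod_mult_def)
next
  case False
  have "right_part u = opt_mult (right_part (butlast u)) (right_part [last u])"
    using right_part_append[of "butlast u" "[last u]"] False by simp
  moreover have "right_part v = opt_mult (right_part [hd v]) (right_part (tl v))"
    using right_part_append[of "[hd v]" "tl v"] False by simp
  ultimately show ?thesis using False
    by (simp add: free_prod_mult_def right_part_append right_part_merge_letters opt_mult_assoc)
qed

lemma hom_on_right_part:
  "hom_on {w. right_part w \<noteq> None} free_prod_mult (*) (\<lambda>w. the (right_part w))"
  unfolding hom_on_def
  by (auto simp: right_part_free_prod_mult elim!: opt_mult.elims)

lemma hom_on_Inl_letters:
  "hom_on (range (\<lambda>s. [Inl s])) free_prod_mult (*) (\<lambda>w. projl (hd w))"
  unfolding hom_on_def by (auto simp: free_prod_mult_def)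

lemma right_part_None_imp_Inl_letter:
  assumes "w \<in> free_prod_carrier" "right_part w = None"
  obtains s where "w = [Inl s]"
proof -
  have letters: "isl c" if "c \<in> set w" for c
    using assms(2) that by (induction w rule: right_part.induct) auto
  obtain c rest where w: "w = c # rest"
    using assms(1) unfolding free_prod_carrier_def by (cases w) auto
  have "rest = []"
  proof (rule ccontr)
    assume "rest \<noteq> []"
    then obtain d r where rest: "rest = d # r" by (cases rest) auto
    have "\<not> same_side c d"
      using assms(1) w rest unfolding free_prod_carrier_def alternating_def
      by (auto dest: spec[of _ 0])
    moreover have "isl c" "isl d" using letters w rest by auto
    ultimately show False by (cases c; cases d) auto
  qed
  with letters w that show thesis by (cases c) auto
qed

lemma free_prod_nonidempotents:
  assumes "idems (UNIV :: 'b::semigroup_mult set) (*) = {}"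
  shows "(free_prod_carrier :: ('a::semigroup_mult + 'b) list set)
           - idems free_prod_carrier free_prod_mult
         = {w \<in> free_prod_carrier. right_part w \<noteq> None}
           \<union> (\<lambda>s. [Inl s]) ` (UNIV - idems UNIV (*))"
    (is "?L = ?R")
proof
  have Inl_letter: "[Inl s] \<in> free_prod_carrier" for s :: 'a
    by (simp add: free_prod_carrier_def alternating_def)
  show "?L \<subseteq> ?R"
  proof
    fix w assume w: "w \<in> ?L"
    show "w \<in> ?R"
    proof (cases "right_part w")
      case None
      with w obtain s where "w = [Inl s]"
        using right_part_None_imp_Inl_letter by blast
      with w show ?thesis by (auto simp: idems_def free_prod_mult_def)
    qed (use w in auto)
  qed
  show "?R \<subseteq> ?L"
  proof
    fix w assume w: "w \<in> ?R"
    have "free_prod_mult w w \<noteq> w" if "right_part w = Some t" for t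
    proof
      assume "free_prod_mult w w = w"
      then have "t * t = t" using that right_part_free_prod_mult[of w w] by simp
      with assms show False unfolding idems_def by blast
    qed
    with w Inl_letter show "w \<in> ?L"
      by (auto simp: idems_def free_prod_mult_def)
  qed
qed

lemma strongly_IP_regular_right_part_preimage:
  assumes "strongly_IP_regular (*) Y"
  shows "strongly_IP_regular free_prod_mult {w \<in> free_prod_carrier. right_part w \<in> Some ` Y}"
  by (rule strongly_IP_regular_pullback[OF hom_on_right_part _ _ assms]) auto

lemma strongly_IP_regular_Inl_letters:
  assumes "strongly_IP_regular (*) X"
  shows "strongly_IP_regular free_prod_mult ((\<lambda>s. [Inl s :: 'a::semigroup_mult + 'b::semigroup_mult]) ` X)"
  by (rule strongly_IP_regular_pullback[OF hom_on_Inl_letters _ _ assms]) auto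

theorem mainTheorem12:
  assumes "IP_regular (UNIV :: 'a::semigroup_mult set) (*)"
      and "IP_regular (UNIV :: 'b::semigroup_mult set) (*)"
      and "idems (UNIV :: 'b set) (*) = {}"
  shows "IP_regular (free_prod_carrier :: ('a + 'b) list set) free_prod_mult"
proof -
  obtain FS where FS: "finite FS" "\<Union>FS = UNIV - idems (UNIV :: 'a set) (*)"
    "\<forall>X\<in>FS. strongly_IP_regular (*) X"
    using assms(1) unfolding IP_regular_def by blast
  obtain FT where FT: "finite FT" "\<Union>FT = UNIV - idems (UNIV :: 'b set) (*)"
    "\<forall>Y\<in>FT. strongly_IP_regular (*) Y"
    using assms(2) unfolding IP_regular_def by blast
  define F :: "('a + 'b) list set set" where
    "F = (\<lambda>Y. {w \<in> free_prod_carrier. right_part w \<in> Some ` Y}) ` FT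
         \<union> (\<lambda>X. (\<lambda>s. [Inl s]) ` X) ` FS"
  have "\<Union>FT = UNIV" using FT(2) assms(3) by simp
  then have "\<Union>F = {w \<in> free_prod_carrier. right_part w \<noteq> None} \<union> (\<lambda>s. [Inl s]) ` \<Union>FS"
    unfolding F_def by fastforce
  then have "\<Union>F = free_prod_carrier - idems free_prod_carrier free_prod_mult"
    by (simp add: free_prod_nonidempotents[OF assms(3)] FS(2))
  moreover have "\<forall>X\<in>F. strongly_IP_regular free_prod_mult X"
    unfolding F_def using FS(3) FT(3)
    by (auto intro: strongly_IP_regular_right_part_preimage strongly_IP_regular_Inl_letters)
  moreover have "finite F" unfolding F_def using FS(1) FT(1) by simp
  ultimately show ?thesis unfolding IP_regular_def by (intro exI[of _ F] conjI) assumption+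
qed

end
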